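(* Let $G=(V,E,p)$ be an influence graph with $V=\{1,\dots,n\}$ and let $(x_1,\dots,x_n)\in[0,1]^n$. For the Poisson process with rates $x_1,\dots,x_n$ described in the context, for every $t\in[0,1]$ and every fixed partial realization $\psi$ (that $\Psi(t)$ can take), $$\mathbb{E}\left[\frac{d f(\Psi(t))}{dt}\,\Big|\,\Psi(t)=\psi\right]\ge f^{+}(x_1,\dots,x_n)-\sigma(\Gamma(\psi)),$$ where the left side means $\lim_{dt\to 0^+}\frac{1}{dt}\mathbb{E}[f(\Psi(t+dt))-f(\Psi(t))\mid \Psi(t)=\psi]$.
   Context: IC model: each edge $(u,v)$ of $G$ has probability $p_{uv}\in[0,1]$; a realization (live-edge graph) $\phi$ contains each edge independently with probability $p_{uv}$, with distribution $\mathcal{P}$. $\Gamma(S,\phi)$ is the set of nodes reachable from $S$ in $\phi$ and $\sigma(S)=\mathbb{E}_{\Phi\sim\mathcal{P}}|\Gamma(S,\Phi)|$. Full-adoption feedback: selecting $u$ as a seed reveals the status of all out-going edges of every node reachable from $u$ in $\phi$. A partial realization $\psi$ records the seeds selected so far (the set ${\rm dom}(\psi)$) together with their feedback; $\Gamma(\psi)$ is the set of nodes reachable from ${\rm dom}(\psi)$ (determined by $\psi$) and $f(\psi)=|\Gamma(\psi)|$. An adaptive policy $\pi$ maps partial realizations to the next node to select; $V(\pi,\phi)$ is its seed set under $\phi$ and $\sigma(\pi)=\mathbb{E}_{\Phi\sim\mathcal{P}}|\Gamma(V(\pi,\Phi),\Phi)|$. Define $f^{+}(x_1,\dots,x_n)=\sup_\pi\{\sigma(\pi):\Pr_{\Phi\sim\mathcal{P}}[i\in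 V(\pi,\Phi)]=x_i\ \forall i\in[n]\}$. Poisson process: a realization $\phi\sim\mathcal{P}$ is drawn; there are $n$ independent Poisson clocks $C_1,\dots,C_n$, clock $C_i$ signalling at rate $x_i$; whenever $C_i$ signals, node $i$ is selected as a seed and its feedback under $\phi$ is observed. $\Psi(t)$ is the (random) partial realization at time $t$, with $\Psi(0)=\emptyset$. *)

theory Defs
  imports "HOL-Probability.Probability"
begin

type_synonym edge = "nat \<times> nat"

text \<open>Partial realization: the seed set dom(psi) together with the observed status of
  edges (Some True = live, Some False = blocked, None = not observed).\<close>
type_synonym partial_real = "nat set \<times> (edge \<Rightarrow> bool option)"

text \<open>A (deterministic) adaptive policy: maps a partial realization to the next seed,
  None meaning that the policy stops.\<close>
type_synonym policy = "partial_real \<Rightarrow> nat option"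

definition influence_graph :: "nat set \<Rightarrow> edge set \<Rightarrow> (edge \<Rightarrow> real) \<Rightarrow> bool" where
  "influence_graph V E p \<longleftrightarrow> finite V \<and> E \<subseteq> V \<times> V \<and> (\<forall>e\<in>E. 0 \<le> p e \<and> p e \<le> 1)"

definition realization_pmf :: "edge set \<Rightarrow> (edge \<Rightarrow> real) \<Rightarrow> edge set pmf" where
  "realization_pmf E p = map_pmf (\<lambda>b. {e\<in>E. b e}) (Pi_pmf E False (\<lambda>e. bernoulli_pmf (p e)))"

definition Gamma :: "nat set \<Rightarrow> edge set \<Rightarrow> nat set" where
  "Gamma S \<phi> = (\<phi>\<^sup>*) `` S"

definition psi_of :: "edge set \<Rightarrow> nat set \<Rightarrow> edge set \<Rightarrow> partial_real" where
  "psi_of E S \<phi> = (S, \<lambda>e. if e \<in> E \<and> fst e \<in> Gamma S \<phi> then Some (e \<in> \<phi>) else None)"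

definition Gamma_psi :: "partial_real \<Rightarrow> nat set" where
  "Gamma_psi \<psi> = ({e. snd \<psi> e = Some True}\<^sup>*) `` fst \<psi>"

definition f_psi :: "partial_real \<Rightarrow> real" where
  "f_psi \<psi> = real (card (Gamma_psi \<psi>))"

definition sigma_set :: "edge set \<Rightarrow> (edge \<Rightarrow> real) \<Rightarrow> nat set \<Rightarrow> real" where
  "sigma_set E p S = measure_pmf.expectation (realization_pmf E p) (\<lambda>\<phi>. real (card (Gamma S \<phi>)))"

definition valid_policy :: "nat set \<Rightarrow> policy \<Rightarrow> bool" where
  "valid_policy V \<pi> \<longleftrightarrow> (\<forall>\<psi>. \<pi> \<psi> = None \<or> (\<exists>v. \<pi> \<psi> = Some v \<and> v \<in> V \<and> v \<notin> fst \<psi>))"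

definition policy_step :: "edge set \<Rightarrow> policy \<Rightarrow> edge set \<Rightarrow> nat set \<Rightarrow> nat set" where
  "policy_step E \<pi> \<phi> S = (case \<pi> (psi_of E S \<phi>) of None \<Rightarrow> S | Some v \<Rightarrow> insert v S)"

text \<open>V(pi,phi): seed set of the policy run under phi (a valid policy selects at most card V seeds).\<close>
definition seeds :: "nat set \<Rightarrow> edge set \<Rightarrow> policy \<Rightarrow> edge set \<Rightarrow> nat set" where
  "seeds V E \<pi> \<phi> = (policy_step E \<pi> \<phi> ^^ card V) {}"

text \<open>Randomized adaptive policies: a distribution R over (valid) deterministic policies,
  independent of the realization.\<close>
definition sigma_policy :: "nat set \<Rightarrow> edge set \<Rightarrow> (edge \<Rightarrow> real) \<Rightarrow> policy pmf \<Rightarrow> real" where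
  "sigma_policy V E p R = measure_pmf.expectation (pair_pmf R (realization_pmf E p))
     (\<lambda>(\<pi>, \<phi>). real (card (Gamma (seeds V E \<pi> \<phi>) \<phi>)))"

definition sel_prob :: "nat set \<Rightarrow> edge set \<Rightarrow> (edge \<Rightarrow> real) \<Rightarrow> policy pmf \<Rightarrow> nat \<Rightarrow> real" where
  "sel_prob V E p R i = measure_pmf.prob (pair_pmf R (realization_pmf E p))
     {(\<pi>, \<phi>). i \<in> seeds V E \<pi> \<phi>}"

definition f_plus :: "nat set \<Rightarrow> edge set \<Rightarrow> (edge \<Rightarrow> real) \<Rightarrow> (nat \<Rightarrow> real) \<Rightarrow> real" where
  "f_plus V E p x = Sup {sigma_policy V E p R | R.
      (\<forall>\<pi>\<in>set_pmf R. valid_policy V \<pi>) \<and> (\<forall>i\<in>V. sel_prob V E p R i = x i)}"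

text \<open>Poisson clocks: the set of nodes whose clock (rate x i) signals at least once during
  a time interval of length t; clocks are independent, and this probability is 1 - exp(-x i t).\<close>
definition signal_pmf :: "nat set \<Rightarrow> (nat \<Rightarrow> real) \<Rightarrow> real \<Rightarrow> nat set pmf" where
  "signal_pmf V x t = map_pmf (\<lambda>b. {i\<in>V. b i})
     (Pi_pmf V False (\<lambda>i. bernoulli_pmf (1 - exp (- (x i * t)))))"

text \<open>Law of Psi(t): seeds selected in [0,t] are those whose clocks signalled in [0,t].\<close>
definition Psi_law :: "nat set \<Rightarrow> edge set \<Rightarrow> (edge \<Rightarrow> real) \<Rightarrow> (nat \<Rightarrow> real) \<Rightarrow> real \<Rightarrow> partial_real pmf" where
  "Psi_law V E p x t = map_pmf (\<lambda>(A, \<phi>). psi_of E A \<phi>)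
     (pair_pmf (signal_pmf V x t) (realization_pmf E p))"

text \<open>Joint law of (Psi(t), Psi(t+h)), h \<ge> 0: by independent increments, the clocks signalling
  in (t,t+h] are independent of those that signalled in [0,t] and of phi.\<close>
definition Psi_pair_law :: "nat set \<Rightarrow> edge set \<Rightarrow> (edge \<Rightarrow> real) \<Rightarrow> (nat \<Rightarrow> real) \<Rightarrow> real \<Rightarrow> real
    \<Rightarrow> (partial_real \<times> partial_real) pmf" where
  "Psi_pair_law V E p x t h = map_pmf (\<lambda>((A, C), \<phi>). (psi_of E A \<phi>, psi_of E (A \<union> C) \<phi>))
     (pair_pmf (pair_pmf (signal_pmf V x t) (signal_pmf V x h)) (realization_pmf E p))"

definition cond_increment :: "nat set \<Rightarrow> edge set \<Rightarrow> (edge \<Rightarrow> real) \<Rightarrow> (nat \<Rightarrow> real) \<Rightarrow> real \<Rightarrow> real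
    \<Rightarrow> partial_real \<Rightarrow> real" where
  "cond_increment V E p x t h \<psi> = measure_pmf.expectation
     (cond_pmf (Psi_pair_law V E p x t h) {q. fst q = \<psi>}) (\<lambda>(a, b). f_psi b - f_psi a)"

end

(*
  Fix psi and let B = Gamma(psi). Given Psi(t) = psi, the edges leaving B have not been observed,
  so they are still independent with their prior probabilities. During a short interval of length h
  the clock of i alone rings with probability x_i h + o(h), and two or more clocks ring with
  probability o(h); hence the increment rate of f is sum_i x_i Delta_i, where Delta_i is the
  expected number of nodes outside B reached from i once the edges leaving B are deleted.

  Conversely, consider any adaptive policy. When it selects a new seed v, the edges leaving the
  nodes not yet reached are unobserved, hence fresh; deleting in addition the edges leaving what is
  already reached and B can only shrink the reach of v, so the expected number of new nodes outside
  Gamma(B) is at most Delta_v. Summing over the selected seeds gives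
  sigma(pi) <= sigma(B) + sum_i Pr[i in V(pi)] Delta_i, and taking the supremum over policies with
  marginals x yields f^+(x) <= sigma(B) + sum_i x_i Delta_i.
*)
theory Submission
  imports Defs "HOL-Real_Asymp.Real_Asymp"
begin

section \<open>Reachability and feedback\<close>

abbreviation out_edges :: "nat set \<Rightarrow> edge set" where
  "out_edges A \<equiv> {e. fst e \<in> A}"

lemma Gamma_subset: "S \<subseteq> Gamma S \<phi>"
  unfolding Gamma_def by auto

lemma Gamma_mono: "S \<subseteq> S' \<Longrightarrow> \<phi> \<subseteq> \<phi>' \<Longrightarrow> Gamma S \<phi> \<subseteq> Gamma S' \<phi>'"
  unfolding Gamma_def using rtrancl_mono by blast

lemma Gamma_closed: "u \<in> Gamma S \<phi> \<Longrightarrow> (u, w) \<in> \<phi> \<Longrightarrow> w \<in> Gamma S \<phi>"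
  unfolding Gamma_def by (auto intro: rtrancl_into_rtrancl)

lemma Gamma_least:
  assumes "S \<subseteq> X" and "\<And>u w. u \<in> X \<Longrightarrow> (u, w) \<in> \<phi> \<Longrightarrow> w \<in> X"
  shows "Gamma S \<phi> \<subseteq> X"
proof
  fix w assume "w \<in> Gamma S \<phi>"
  then obtain s where "s \<in> S" "(s, w) \<in> \<phi>\<^sup>*" unfolding Gamma_def by auto
  from \<open>(s, w) \<in> \<phi>\<^sup>*\<close> show "w \<in> X"
    by (induction rule: rtrancl_induct) (use assms \<open>s \<in> S\<close> in auto)
qed

lemma Gamma_subset_Un_snd: "Gamma S \<phi> \<subseteq> S \<union> snd ` \<phi>"
  by (rule Gamma_least) (auto intro: image_eqI[where x = "(_, _)"])

lemma finite_Gamma: "finite S \<Longrightarrow> finite \<phi> \<Longrightarrow> finite (Gamma S \<phi>)"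
  using Gamma_subset_Un_snd by (metis finite_Un finite_imageI finite_subset)

lemma Gamma_Int_out_edges: "Gamma S (\<phi> \<inter> out_edges (Gamma S \<phi>)) = Gamma S \<phi>"
proof
  show sub: "Gamma S (\<phi> \<inter> out_edges (Gamma S \<phi>)) \<subseteq> Gamma S \<phi>"
    by (rule Gamma_mono) auto
  show "Gamma S \<phi> \<subseteq> Gamma S (\<phi> \<inter> out_edges (Gamma S \<phi>))"
  proof (rule Gamma_least[OF Gamma_subset])
    fix u w assume u: "u \<in> Gamma S (\<phi> \<inter> out_edges (Gamma S \<phi>))" and "(u, w) \<in> \<phi>"
    with sub have "(u, w) \<in> \<phi> \<inter> out_edges (Gamma S \<phi>)"
      by auto
    with u show "w \<in> Gamma S (\<phi> \<inter> out_edges (Gamma S \<phi>))"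
      by (rule Gamma_closed)
  qed
qed

lemma Gamma_eq_if_out_edges_eq:
  assumes "\<phi>' \<inter> out_edges (Gamma S \<phi>) = \<phi> \<inter> out_edges (Gamma S \<phi>)"
  shows "Gamma S \<phi>' = Gamma S \<phi>"
proof
  show "Gamma S \<phi>' \<subseteq> Gamma S \<phi>"
    using assms by (intro Gamma_least Gamma_subset) (auto intro: Gamma_closed)
  have "Gamma S \<phi> = Gamma S (\<phi>' \<inter> out_edges (Gamma S \<phi>))"
    using Gamma_Int_out_edges[of S \<phi>] assms by simp
  also have "\<dots> \<subseteq> Gamma S \<phi>'"
    by (rule Gamma_mono) auto
  finally show "Gamma S \<phi> \<subseteq> Gamma S \<phi>'" .
qed

lemma fst_psi_of [simp]: "fst (psi_of E S \<phi>) = S"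
  by (simp add: psi_of_def)

lemma Gamma_psi_psi_of:
  assumes "\<phi> \<subseteq> E"
  shows "Gamma_psi (psi_of E S \<phi>) = Gamma S \<phi>"
proof -
  have "{e. snd (psi_of E S \<phi>) e = Some True} = \<phi> \<inter> out_edges (Gamma S \<phi>)"
    using assms unfolding psi_of_def by auto
  then have "Gamma_psi (psi_of E S \<phi>) = Gamma S (\<phi> \<inter> out_edges (Gamma S \<phi>))"
    by (simp add: Gamma_psi_def Gamma_def)
  then show ?thesis
    by (simp add: Gamma_Int_out_edges)
qed

lemma f_psi_psi_of: "\<phi> \<subseteq> E \<Longrightarrow> f_psi (psi_of E S \<phi>) = real (card (Gamma S \<phi>))"
  by (simp add: f_psi_def Gamma_psi_psi_of)

lemma psi_of_eq_if_out_edges_eq: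
  assumes "\<phi>' \<inter> out_edges (Gamma S \<phi>) = \<phi> \<inter> out_edges (Gamma S \<phi>)"
  shows "psi_of E S \<phi>' = psi_of E S \<phi>"
proof -
  have "Gamma S \<phi>' = Gamma S \<phi>"
    using assms by (rule Gamma_eq_if_out_edges_eq)
  moreover have "e \<in> \<phi>' \<longleftrightarrow> e \<in> \<phi>" if "fst e \<in> Gamma S \<phi>" for e
    using assms that by blast
  ultimately show ?thesis
    unfolding psi_of_def by (intro prod_eqI ext) simp_all
qed

lemma psi_of_eq_iff:
  assumes "\<phi> \<subseteq> E" and "\<phi>' \<subseteq> E"
  shows "psi_of E S' \<phi>' = psi_of E S \<phi> \<longleftrightarrow>
    S' = S \<and> \<phi>' \<inter> out_edges (Gamma S \<phi>) = \<phi> \<inter> out_edges (Gamma S \<phi>)"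
proof
  assume eq: "psi_of E S' \<phi>' = psi_of E S \<phi>"
  then have "S' = S"
    by (metis fst_psi_of)
  have Gamma_eq: "Gamma S' \<phi>' = Gamma S \<phi>"
    using eq Gamma_psi_psi_of assms by metis
  have "e \<in> \<phi>' \<longleftrightarrow> e \<in> \<phi>" if "e \<in> E" "fst e \<in> Gamma S \<phi>" for e
  proof -
    have "snd (psi_of E S' \<phi>') e = snd (psi_of E S \<phi>) e"
      using eq by simp
    then show ?thesis
      using that Gamma_eq by (simp add: psi_of_def)
  qed
  then show "S' = S \<and> \<phi>' \<inter> out_edges (Gamma S \<phi>) = \<phi> \<inter> out_edges (Gamma S \<phi>)"
    using \<open>S' = S\<close> assms by blast
next
  assume "S' = S \<and> \<phi>' \<inter> out_edges (Gamma S \<phi>) = \<phi> \<inter> out_edges (Gamma S \<phi>)"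
  then show "psi_of E S' \<phi>' = psi_of E S \<phi>"
    using psi_of_eq_if_out_edges_eq by blast
qed

text \<open>The discrete analogue of a stopping time: a random seed set that can be recomputed from
  the feedback it produces.\<close>
definition feedback_determined :: "(edge set \<Rightarrow> nat set) \<Rightarrow> bool" where
  "feedback_determined S \<longleftrightarrow> (\<forall>\<phi> \<phi>'.
     \<phi>' \<inter> out_edges (Gamma (S \<phi>) \<phi>) = \<phi> \<inter> out_edges (Gamma (S \<phi>) \<phi>) \<longrightarrow> S \<phi>' = S \<phi>)"

lemma feedback_determined_const: "feedback_determined (\<lambda>_. A)"
  by (simp add: feedback_determined_def)

lemma psi_of_feedback_eq_iff:
  assumes "feedback_determined S" and "\<phi> \<subseteq> E" and "\<phi>' \<subseteq> E"
  shows "psi_of E (S \<phi>') \<phi>' = psi_of E (S \<phi>) \<phi> \<longleftrightarrow>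
    \<phi>' \<inter> out_edges (Gamma (S \<phi>) \<phi>) = \<phi> \<inter> out_edges (Gamma (S \<phi>) \<phi>)"
proof -
  have "\<phi>' \<inter> out_edges (Gamma (S \<phi>) \<phi>) = \<phi> \<inter> out_edges (Gamma (S \<phi>) \<phi>) \<Longrightarrow> S \<phi>' = S \<phi>"
    using assms(1) unfolding feedback_determined_def by blast
  then show ?thesis
    using psi_of_eq_iff[OF assms(2,3)] by blast
qed

lemma expectation_cong_pmf:
  fixes f g :: "'a \<Rightarrow> real"
  assumes "\<And>x. x \<in> set_pmf M \<Longrightarrow> f x = g x"
  shows "measure_pmf.expectation M f = measure_pmf.expectation M g"
  by (rule integral_cong_AE) (auto simp: AE_measure_pmf_iff assms)

lemma expectation_pmf_finite:
  fixes f :: "'a \<Rightarrow> real"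
  assumes "finite A" and "set_pmf M \<subseteq> A"
  shows "measure_pmf.expectation M f = (\<Sum>a\<in>A. pmf M a * f a)"
  using integral_measure_pmf_real[of A M f] assms by (auto simp: mult.commute)

lemma expectation_pair_pmf_finite:
  fixes F :: "'a \<times> 'b \<Rightarrow> real"
  assumes "finite (set_pmf M)" and "finite (set_pmf N)"
  shows "measure_pmf.expectation (pair_pmf M N) F =
    measure_pmf.expectation M (\<lambda>a. measure_pmf.expectation N (\<lambda>b. F (a, b)))"
proof -
  have "measure_pmf.expectation (pair_pmf M N) F =
      (\<Sum>(a, b)\<in>set_pmf M \<times> set_pmf N. pmf M a * pmf N b * F (a, b))"
    using assms by (subst expectation_pmf_finite[of "set_pmf M \<times> set_pmf N"])
      (auto intro!: sum.cong simp: pmf_pair)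
  also have "\<dots> = (\<Sum>a\<in>set_pmf M. pmf M a * (\<Sum>b\<in>set_pmf N. pmf N b * F (a, b)))"
    by (simp add: sum.cartesian_product[symmetric] sum_distrib_left mult.assoc)
  also have "\<dots> = measure_pmf.expectation M (\<lambda>a. measure_pmf.expectation N (\<lambda>b. F (a, b)))"
    using assms by (simp add: expectation_pmf_finite[of "set_pmf M"] expectation_pmf_finite[of "set_pmf N"])
  finally show ?thesis .
qed

lemma expectation_pair_pmf_finite_swap:
  fixes F :: "'a \<times> 'b \<Rightarrow> real"
  assumes "finite (set_pmf M)" and "finite (set_pmf N)"
  shows "measure_pmf.expectation (pair_pmf M N) F =
    measure_pmf.expectation N (\<lambda>b. measure_pmf.expectation M (\<lambda>a. F (a, b)))"
  by (subst pair_commute_pmf) (simp add: expectation_pair_pmf_finite assms case_prod_unfold)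

lemma expectation_pair_pmf_mono:
  fixes Y Z :: "'a \<times> 'b \<Rightarrow> real"
  assumes "\<And>x. 0 \<le> Y x" and "\<And>x. 0 \<le> Z x"
    and "\<And>a b. a \<in> set_pmf R \<Longrightarrow> b \<in> set_pmf M \<Longrightarrow> Y (a, b) \<le> c"
    and "\<And>a b. a \<in> set_pmf R \<Longrightarrow> b \<in> set_pmf M \<Longrightarrow> Z (a, b) \<le> d"
    and "\<And>a. a \<in> set_pmf R \<Longrightarrow>
      measure_pmf.expectation M (\<lambda>b. Y (a, b)) \<le> measure_pmf.expectation M (\<lambda>b. Z (a, b))"
  shows "measure_pmf.expectation (pair_pmf R M) Y \<le> measure_pmf.expectation (pair_pmf R M) Z"
proof -
  have integrable: "integrable (measure_pmf P) W"
    if "\<And>x. 0 \<le> W x" "\<And>x. x \<in> set_pmf P \<Longrightarrow> W x \<le> bound" for P bound and W :: "'c \<Rightarrow> real"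
    by (rule measure_pmf.integrable_const_bound[where B = bound]) (auto intro!: AE_pmfI simp: that)
  have as_nn_integral: "ennreal (measure_pmf.expectation (pair_pmf R M) W) =
      (\<integral>\<^sup>+a. ennreal (measure_pmf.expectation M (\<lambda>b. W (a, b))) \<partial>R)"
    if "\<And>x. 0 \<le> W x" "\<And>a b. a \<in> set_pmf R \<Longrightarrow> b \<in> set_pmf M \<Longrightarrow> W (a, b) \<le> bound" for W bound
  proof -
    have "ennreal (measure_pmf.expectation (pair_pmf R M) W) = (\<integral>\<^sup>+x. ennreal (W x) \<partial>pair_pmf R M)"
      using that by (intro nn_integral_eq_integral[symmetric] integrable) auto
    also have "\<dots> = (\<integral>\<^sup>+a. \<integral>\<^sup>+b. ennreal (W (a, b)) \<partial>M \<partial>R)"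
      by (rule nn_integral_pair_pmf')
    also have "\<dots> = (\<integral>\<^sup>+a. ennreal (measure_pmf.expectation M (\<lambda>b. W (a, b))) \<partial>R)"
      using that by (intro nn_integral_cong_AE AE_pmfI nn_integral_eq_integral integrable) auto
    finally show ?thesis .
  qed
  have "ennreal (measure_pmf.expectation (pair_pmf R M) Y) =
      (\<integral>\<^sup>+a. ennreal (measure_pmf.expectation M (\<lambda>b. Y (a, b))) \<partial>R)"
    using assms(1,3) by (rule as_nn_integral)
  also have "\<dots> \<le> (\<integral>\<^sup>+a. ennreal (measure_pmf.expectation M (\<lambda>b. Z (a, b))) \<partial>R)"
    by (intro nn_integral_mono_AE AE_pmfI ennreal_leI assms(5))
  also have "\<dots> = ennreal (measure_pmf.expectation (pair_pmf R M) Z)"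
    using assms(2,4) by (rule as_nn_integral[symmetric])
  finally show ?thesis
    by (simp add: ennreal_le_iff integral_nonneg_AE assms(2))
qed

lemma expectation_const_plus_indicators:
  fixes a :: "'i \<Rightarrow> real"
  shows "measure_pmf.expectation M (\<lambda>x. c + (\<Sum>i\<in>I. a i * indicator (A i) x)) =
    c + (\<Sum>i\<in>I. a i * measure_pmf.prob M (A i))"
proof -
  have integrable: "integrable (measure_pmf M) (\<lambda>x. a i * indicator (A i) x)" for i
    by (intro integrable_mult_right integrable_real_indicator) (simp_all add: measure_pmf.emeasure_eq_measure)
  show ?thesis
    by (subst Bochner_Integration.integral_add)
      (auto intro!: integrable_sum integrable simp: Bochner_Integration.integral_sum[OF integrable])
qed

lemma expectation_cond_pmf:
  fixes g :: "'a \<Rightarrow> real"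
  assumes "finite (set_pmf P)" and "set_pmf P \<inter> S \<noteq> {}"
  shows "measure_pmf.expectation (cond_pmf P S) g =
    measure_pmf.expectation P (\<lambda>q. if q \<in> S then g q else 0) / measure_pmf.prob P S"
proof -
  have "measure_pmf.expectation (cond_pmf P S) g = (\<Sum>a\<in>set_pmf P. pmf (cond_pmf P S) a * g a)"
    using assms by (intro expectation_pmf_finite) auto
  also have "\<dots> = (\<Sum>a\<in>set_pmf P. pmf P a * (if a \<in> S then g a else 0)) / measure_pmf.prob P S"
    unfolding sum_divide_distrib by (intro sum.cong) (auto simp: pmf_cond[OF assms(2)])
  also have "\<dots> = measure_pmf.expectation P (\<lambda>q. if q \<in> S then g q else 0) / measure_pmf.prob P S"
    using assms by (simp add: expectation_pmf_finite[of "set_pmf P"])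
  finally show ?thesis .
qed

section \<open>Independence of the edges of a realization\<close>

lemma set_pmf_realization_pmf: "set_pmf (realization_pmf E p) \<subseteq> Pow E"
  unfolding realization_pmf_def by auto

lemma realization_subset_edges: "\<phi> \<in> set_pmf (realization_pmf E p) \<Longrightarrow> \<phi> \<subseteq> E"
  using set_pmf_realization_pmf by blast

lemma finite_realization: "finite E \<Longrightarrow> \<phi> \<in> set_pmf (realization_pmf E p) \<Longrightarrow> finite \<phi>"
  by (metis finite_subset realization_subset_edges)

lemma finite_set_pmf_realization_pmf: "finite E \<Longrightarrow> finite (set_pmf (realization_pmf E p))"
  using set_pmf_realization_pmf by (meson finite_Pow_iff finite_subset)

lemma integrable_realization_pmf:
  "finite E \<Longrightarrow> integrable (measure_pmf (realization_pmf E p)) (f :: edge set \<Rightarrow> real)"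
  by (intro integrable_measure_pmf_finite finite_set_pmf_realization_pmf)

lemma realization_pmf_split:
  assumes "finite E"
  shows "realization_pmf E p = map_pmf (\<lambda>(a, b). a \<union> b)
    (pair_pmf (realization_pmf (E \<inter> F) p) (realization_pmf (E - F) p))"
proof -
  have "Pi_pmf E False (\<lambda>e. bernoulli_pmf (p e)) =
      map_pmf (\<lambda>(f, g) e. if e \<in> E \<inter> F then f e else g e)
        (pair_pmf (Pi_pmf (E \<inter> F) False (\<lambda>e. bernoulli_pmf (p e)))
          (Pi_pmf (E - F) False (\<lambda>e. bernoulli_pmf (p e))))"
    by (subst Int_Diff_Un[of E F, symmetric], rule Pi_pmf_union) (use assms in auto)
  then show ?thesis
    unfolding realization_pmf_def
    by (simp add: pmf.map_comp o_def map_pair[symmetric] case_prod_unfold) (auto intro!: map_pmf_cong)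
qed

lemma expectation_realization_pmf_indep:
  fixes D :: "edge set \<Rightarrow> real"
  assumes "finite E" and "\<And>\<phi>. \<phi> \<subseteq> E \<Longrightarrow> D (\<phi> - F) = D \<phi>"
  shows "measure_pmf.expectation (realization_pmf E p) (\<lambda>\<phi>. if \<phi> \<inter> F = L then D \<phi> else 0) =
    measure_pmf.expectation (realization_pmf E p) (\<lambda>\<phi>. if \<phi> \<inter> F = L then 1 else 0) *
    measure_pmf.expectation (realization_pmf E p) D"
proof -
  let ?A = "realization_pmf (E \<inter> F) p" and ?B = "realization_pmf (E - F) p"
  have fin: "finite (set_pmf ?A)" "finite (set_pmf ?B)"
    using assms(1) by (auto intro: finite_set_pmf_realization_pmf)
  have split: "measure_pmf.expectation (realization_pmf E p) G =
      measure_pmf.expectation (pair_pmf ?A ?B) (\<lambda>(a, b). G' a * G'' b)"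
    if factor: "\<And>a b. a \<subseteq> E \<inter> F \<Longrightarrow> b \<subseteq> E - F \<Longrightarrow> G (a \<union> b) = G' a * G'' b"
    for G G' and G'' :: "edge set \<Rightarrow> real"
  proof -
    have "G (a \<union> b) = G' a * G'' b" if "(a, b) \<in> set_pmf (pair_pmf ?A ?B)" for a b
      using that set_pmf_realization_pmf by (intro factor) auto
    then show ?thesis
      by (subst realization_pmf_split[OF assms(1), where F = F])
        (auto intro!: expectation_cong_pmf simp: case_prod_unfold)
  qed
  have parts: "(a \<union> b) \<inter> F = a" "(a \<union> b) - F = b" if "a \<subseteq> E \<inter> F" "b \<subseteq> E - F" for a b
    using that by blast+
  have D_factor: "D (a \<union> b) = D b" if "a \<subseteq> E \<inter> F" "b \<subseteq> E - F" for a b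
  proof -
    have "D (a \<union> b - F) = D (a \<union> b)"
      using that by (intro assms(2)) blast
    then show ?thesis
      unfolding parts(2)[OF that] by simp
  qed
  have "measure_pmf.expectation (realization_pmf E p) (\<lambda>\<phi>. if \<phi> \<inter> F = L then D \<phi> else 0) =
      measure_pmf.expectation ?A (\<lambda>a. if a = L then 1 else 0) * measure_pmf.expectation ?B D"
    using parts D_factor
    by (subst split[where G' = "\<lambda>a. if a = L then 1 else 0" and G'' = D])
      (auto simp: expectation_pair_pmf_finite[OF fin])
  moreover have "measure_pmf.expectation (realization_pmf E p) (\<lambda>\<phi>. if \<phi> \<inter> F = L then 1 else 0) =
      measure_pmf.expectation ?A (\<lambda>a. if a = L then 1 else 0 :: real)"
    using parts by (subst split[where G' = "\<lambda>a. if a = L then 1 else 0" and G'' = "\<lambda>_. 1"])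
      (auto simp: expectation_pair_pmf_finite[OF fin])
  moreover have "measure_pmf.expectation (realization_pmf E p) D = measure_pmf.expectation ?B D"
    using parts D_factor
    by (subst split[where G' = "\<lambda>_. 1" and G'' = D]) (auto simp: expectation_pair_pmf_finite[OF fin])
  ultimately show ?thesis
    by simp
qed

lemma expectation_split_by_value:
  fixes W :: "'a \<Rightarrow> real"
  assumes "finite (set_pmf M)"
  shows "measure_pmf.expectation M W =
    (\<Sum>h\<in>g ` set_pmf M. measure_pmf.expectation M (\<lambda>\<phi>. if g \<phi> = h then W \<phi> else 0))"
proof -
  have "(\<Sum>h\<in>g ` set_pmf M. measure_pmf.expectation M (\<lambda>\<phi>. if g \<phi> = h then W \<phi> else 0)) =
      measure_pmf.expectation M (\<lambda>\<phi>. \<Sum>h\<in>g ` set_pmf M. if g \<phi> = h then W \<phi> else 0)"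
    by (rule Bochner_Integration.integral_sum[symmetric]) (rule integrable_measure_pmf_finite[OF assms])
  also have "\<dots> = measure_pmf.expectation M W"
    by (rule expectation_cong_pmf) (use assms in \<open>simp add: sum.delta'\<close>)
  finally show ?thesis
    by simp
qed

text \<open>The edges leaving nodes not reached by a feedback-determined seed set are unobserved, so,
  conditionally on the observation, they keep their prior distribution.\<close>
theorem expectation_unobserved_edges:
  fixes G :: "partial_real \<Rightarrow> edge set \<Rightarrow> real"
  assumes "finite E" and "feedback_determined S"
    and "\<And>h \<phi>. \<phi> \<subseteq> E \<Longrightarrow> G h (\<phi> - out_edges (Gamma_psi h)) = G h \<phi>"
  shows "measure_pmf.expectation (realization_pmf E p) (\<lambda>\<phi>. G (psi_of E (S \<phi>) \<phi>) \<phi>) =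
    measure_pmf.expectation (realization_pmf E p)
      (\<lambda>\<phi>. measure_pmf.expectation (realization_pmf E p) (G (psi_of E (S \<phi>) \<phi>)))"
proof -
  let ?M = "realization_pmf E p" and ?obs = "\<lambda>\<phi>. psi_of E (S \<phi>) \<phi>"
  have fin: "finite (set_pmf ?M)"
    using assms(1) by (rule finite_set_pmf_realization_pmf)
  have piece: "measure_pmf.expectation ?M (\<lambda>\<phi>. if ?obs \<phi> = h then G (?obs \<phi>) \<phi> else 0) =
      measure_pmf.expectation ?M (\<lambda>\<phi>. if ?obs \<phi> = h then measure_pmf.expectation ?M (G (?obs \<phi>)) else 0)"
    if h: "h \<in> ?obs ` set_pmf ?M" for h
  proof -
    obtain \<phi>h where \<phi>h: "\<phi>h \<in> set_pmf ?M" "h = ?obs \<phi>h"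
      using h by blast
    then have "\<phi>h \<subseteq> E"
      by (intro realization_subset_edges)
    define F where "F = out_edges (Gamma (S \<phi>h) \<phi>h)"
    have F: "F = out_edges (Gamma_psi h)"
      unfolding F_def \<phi>h(2) using Gamma_psi_psi_of[OF \<open>\<phi>h \<subseteq> E\<close>] by simp
    have event: "?obs \<phi> = h \<longleftrightarrow> \<phi> \<inter> F = \<phi>h \<inter> F" if "\<phi> \<in> set_pmf ?M" for \<phi>
      using that realization_subset_edges psi_of_feedback_eq_iff[OF assms(2) \<open>\<phi>h \<subseteq> E\<close>, of \<phi>]
      unfolding \<phi>h(2) F_def by blast
    have "measure_pmf.expectation ?M (\<lambda>\<phi>. if ?obs \<phi> = h then G (?obs \<phi>) \<phi> else 0) =
        measure_pmf.expectation ?M (\<lambda>\<phi>. if \<phi> \<inter> F = \<phi>h \<inter> F then G h \<phi> else 0)"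
      by (rule expectation_cong_pmf) (simp add: event[symmetric])
    also have "\<dots> = measure_pmf.expectation ?M (\<lambda>\<phi>. if \<phi> \<inter> F = \<phi>h \<inter> F then 1 else 0) *
        measure_pmf.expectation ?M (G h)"
      using assms(1,3) unfolding F by (rule expectation_realization_pmf_indep)
    also have "\<dots> = measure_pmf.expectation ?M
        (\<lambda>\<phi>. if \<phi> \<inter> F = \<phi>h \<inter> F then measure_pmf.expectation ?M (G h) else 0)"
      using expectation_realization_pmf_indep[OF assms(1),
          where F = F and D = "\<lambda>_. measure_pmf.expectation ?M (G h)"]
      by simp
    also have "\<dots> = measure_pmf.expectation ?M
        (\<lambda>\<phi>. if ?obs \<phi> = h then measure_pmf.expectation ?M (G (?obs \<phi>)) else 0)"
      by (rule expectation_cong_pmf) (simp add: event[symmetric])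
    finally show ?thesis .
  qed
  show ?thesis
    by (subst (1 2) expectation_split_by_value[OF fin, of _ ?obs]) (rule sum.cong[OF refl piece])
qed

section \<open>Random sets with independent Bernoulli memberships\<close>

definition bernoulli_set_pmf :: "'a set \<Rightarrow> ('a \<Rightarrow> real) \<Rightarrow> 'a set pmf" where
  "bernoulli_set_pmf V r = map_pmf (\<lambda>b. {i\<in>V. b i}) (Pi_pmf V False (\<lambda>i. bernoulli_pmf (r i)))"

lemma signal_pmf_eq_bernoulli_set_pmf:
  "signal_pmf V x t = bernoulli_set_pmf V (\<lambda>i. 1 - exp (- (x i * t)))"
  by (simp add: signal_pmf_def bernoulli_set_pmf_def)

lemma set_pmf_bernoulli_set_pmf: "set_pmf (bernoulli_set_pmf V r) \<subseteq> Pow V"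
  unfolding bernoulli_set_pmf_def by auto

lemma finite_set_pmf_bernoulli_set_pmf: "finite V \<Longrightarrow> finite (set_pmf (bernoulli_set_pmf V r))"
  using set_pmf_bernoulli_set_pmf by (metis finite_Pow_iff finite_subset)

lemma set_pmf_signal_pmf: "set_pmf (signal_pmf V x t) \<subseteq> Pow V"
  unfolding signal_pmf_eq_bernoulli_set_pmf by (rule set_pmf_bernoulli_set_pmf)

lemma prob_bernoulli_set_pmf_mem:
  assumes "finite V" and "i \<in> V" and "0 \<le> r i" and "r i \<le> 1"
  shows "measure_pmf.prob (bernoulli_set_pmf V r) {S. i \<in> S} = r i"
proof -
  have "measure_pmf.prob (bernoulli_set_pmf V r) {S. i \<in> S} =
      measure_pmf.prob (map_pmf (\<lambda>b. b i) (Pi_pmf V False (\<lambda>i. bernoulli_pmf (r i)))) {True}"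
    unfolding bernoulli_set_pmf_def using assms(2) by (simp add: vimage_def)
  also have "\<dots> = r i"
    using assms by (simp add: Pi_pmf_component measure_pmf_single)
  finally show ?thesis .
qed

lemma pmf_bernoulli_set_pmf:
  assumes "finite V" and "C \<subseteq> V" and "\<forall>i\<in>V. 0 \<le> r i \<and> r i \<le> 1"
  shows "pmf (bernoulli_set_pmf V r) C = (\<Prod>i\<in>V. if i \<in> C then r i else 1 - r i)"
proof -
  have "(\<lambda>b. {i\<in>V. b i}) -` {C} = Pi V (\<lambda>i. {i \<in> C})"
    using assms(2) by auto
  then have "pmf (bernoulli_set_pmf V r) C =
      measure_pmf.prob (Pi_pmf V False (\<lambda>i. bernoulli_pmf (r i))) (Pi V (\<lambda>i. {i \<in> C}))"
    unfolding bernoulli_set_pmf_def by (simp add: pmf_map)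
  also have "\<dots> = (\<Prod>i\<in>V. if i \<in> C then r i else 1 - r i)"
    using assms by (simp add: measure_Pi_pmf_Pi measure_pmf_single) (intro prod.cong; simp)
  finally show ?thesis .
qed

section \<open>Marginal gains\<close>

text \<open>The edges leaving \<open>B\<close> are deleted so that the gain does not depend on them.\<close>
definition residual_gain :: "nat set \<Rightarrow> nat \<Rightarrow> edge set \<Rightarrow> real" where
  "residual_gain B v \<phi> = real (card (Gamma {v} (\<phi> - out_edges B) - B))"

definition expected_gain :: "edge set \<Rightarrow> (edge \<Rightarrow> real) \<Rightarrow> nat set \<Rightarrow> nat \<Rightarrow> real" where
  "expected_gain E p B v = measure_pmf.expectation (realization_pmf E p) (residual_gain B v)"

lemma expected_gain_nonneg: "0 \<le> expected_gain E p B v"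
  unfolding expected_gain_def residual_gain_def by (rule integral_nonneg_AE) simp

lemma residual_gain_Diff_out_edges:
  assumes "A \<subseteq> B"
  shows "residual_gain B v (\<phi> - out_edges A) = residual_gain B v \<phi>"
proof -
  have "\<phi> - out_edges A - out_edges B = \<phi> - out_edges B"
    using assms by blast
  then show ?thesis
    unfolding residual_gain_def by simp
qed

lemma residual_gain_antimono:
  assumes "finite \<phi>" and "B \<subseteq> B'"
  shows "residual_gain B' v \<phi> \<le> residual_gain B v \<phi>"
proof -
  have "Gamma {v} (\<phi> - out_edges B') - B' \<subseteq> Gamma {v} (\<phi> - out_edges B) - B"
    using assms(2) Gamma_mono[of "{v}" "{v}" "\<phi> - out_edges B'" "\<phi> - out_edges B"] by blast
  then show ?thesis
    unfolding residual_gain_def using assms(1) by (simp add: card_mono finite_Gamma)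
qed

lemma card_Gamma_insert:
  assumes "Gamma A \<phi> = B" and "finite A" and "finite \<phi>"
  shows "real (card (Gamma (insert i A) \<phi>)) = real (card B) + residual_gain B i \<phi>"
proof -
  let ?X = "Gamma {i} (\<phi> - out_edges B)"
  have "Gamma (insert i A) \<phi> \<subseteq> B \<union> ?X"
  proof (rule Gamma_least)
    show "insert i A \<subseteq> B \<union> ?X"
      using assms(1) Gamma_subset[of A \<phi>] Gamma_subset[of "{i}"] by blast
    show "w \<in> B \<union> ?X" if "u \<in> B \<union> ?X" "(u, w) \<in> \<phi>" for u w
    proof (cases "u \<in> B")
      case True
      then show ?thesis
        using that(2) assms(1) Gamma_closed by blast
    next
      case False
      then have "u \<in> ?X" "(u, w) \<in> \<phi> - out_edges B"
        using that by auto
      then show ?thesis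
        using Gamma_closed by blast
    qed
  qed
  moreover have "B \<union> ?X \<subseteq> Gamma (insert i A) \<phi>"
    using assms(1) Gamma_mono[of A "insert i A" \<phi> \<phi>] Gamma_mono[of "{i}" "insert i A" "\<phi> - out_edges B" \<phi>]
    by blast
  ultimately have "Gamma (insert i A) \<phi> = B \<union> (?X - B)"
    by blast
  moreover have "card (B \<union> (?X - B)) = card B + card (?X - B)"
    using assms finite_Gamma by (intro card_Un_disjoint) auto
  ultimately show ?thesis
    unfolding residual_gain_def by simp
qed

text \<open>The nodes outside \<open>Gamma B \<phi>\<close> gained by seeding \<open>v\<close> on top of \<open>S\<close> are reached from \<open>v\<close>
  without leaving through \<open>Gamma S \<phi>\<close> or \<open>B\<close>.\<close>
lemma card_Gamma_insert_Diff_le: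
  assumes "finite S" and "finite \<phi>"
  shows "real (card (Gamma (insert v S) \<phi> - Gamma B \<phi>)) \<le>
    real (card (Gamma S \<phi> - Gamma B \<phi>)) + residual_gain (Gamma S \<phi> \<union> B) v \<phi>"
proof -
  let ?A = "Gamma S \<phi> \<union> B"
  let ?X = "Gamma {v} (\<phi> - out_edges ?A)"
  have "Gamma (insert v S) \<phi> \<subseteq> Gamma S \<phi> \<union> Gamma B \<phi> \<union> ?X"
  proof (rule Gamma_least)
    show "insert v S \<subseteq> Gamma S \<phi> \<union> Gamma B \<phi> \<union> ?X"
      using Gamma_subset[of S \<phi>] Gamma_subset[of "{v}"] by blast
    show "w \<in> Gamma S \<phi> \<union> Gamma B \<phi> \<union> ?X" if "u \<in> Gamma S \<phi> \<union> Gamma B \<phi> \<union> ?X" "(u, w) \<in> \<phi>"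
      for u w
    proof (cases "u \<in> Gamma S \<phi> \<union> Gamma B \<phi>")
      case True
      then show ?thesis
        using that(2) Gamma_closed by blast
    next
      case False
      then have "u \<in> ?X" "(u, w) \<in> \<phi> - out_edges ?A"
        using that Gamma_subset[of B \<phi>] by auto
      then show ?thesis
        using Gamma_closed by blast
    qed
  qed
  then have "Gamma (insert v S) \<phi> - Gamma B \<phi> \<subseteq> (Gamma S \<phi> - Gamma B \<phi>) \<union> (?X - ?A)"
    using Gamma_subset[of B \<phi>] by blast
  moreover have "finite (Gamma S \<phi> - Gamma B \<phi>)" "finite (?X - ?A)"
    using assms finite_Gamma by auto
  ultimately have "card (Gamma (insert v S) \<phi> - Gamma B \<phi>) \<le> card (Gamma S \<phi> - Gamma B \<phi>) + card (?X - ?A)"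
    by (meson card_Un_le card_mono finite_UnI le_trans)
  then show ?thesis
    unfolding residual_gain_def by linarith
qed

section \<open>Adaptive policies\<close>

definition policy_run :: "edge set \<Rightarrow> policy \<Rightarrow> edge set \<Rightarrow> nat \<Rightarrow> nat set" where
  "policy_run E \<pi> \<phi> k = (policy_step E \<pi> \<phi> ^^ k) {}"

lemma policy_run_0 [simp]: "policy_run E \<pi> \<phi> 0 = {}"
  by (simp add: policy_run_def)

lemma policy_run_Suc: "policy_run E \<pi> \<phi> (Suc k) = policy_step E \<pi> \<phi> (policy_run E \<pi> \<phi> k)"
  by (simp add: policy_run_def)

lemma seeds_eq_policy_run: "seeds V E \<pi> \<phi> = policy_run E \<pi> \<phi> (card V)"
  by (simp add: seeds_def policy_run_def)

lemma finite_policy_run: "finite (policy_run E \<pi> \<phi> k)"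
  by (induction k) (auto simp: policy_run_Suc policy_step_def split: option.split)

lemma valid_policy_SomeD: "valid_policy V \<pi> \<Longrightarrow> \<pi> \<psi> = Some v \<Longrightarrow> v \<in> V"
  unfolding valid_policy_def by (metis option.inject option.distinct(1))

lemma policy_run_subset:
  assumes "valid_policy V \<pi>"
  shows "policy_run E \<pi> \<phi> k \<subseteq> V"
  by (induction k)
    (auto simp: policy_run_Suc policy_step_def valid_policy_SomeD[OF assms] split: option.split)

lemma policy_run_eq_if_out_edges_eq:
  assumes "\<phi>' \<inter> out_edges (Gamma (policy_run E \<pi> \<phi> k) \<phi>) = \<phi> \<inter> out_edges (Gamma (policy_run E \<pi> \<phi> k) \<phi>)"
  shows "policy_run E \<pi> \<phi>' k = policy_run E \<pi> \<phi> k"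
  using assms
proof (induction k)
  case (Suc k)
  have "Gamma (policy_run E \<pi> \<phi> k) \<phi> \<subseteq> Gamma (policy_run E \<pi> \<phi> (Suc k)) \<phi>"
    by (rule Gamma_mono) (auto simp: policy_run_Suc policy_step_def split: option.split)
  then have agree: "\<phi>' \<inter> out_edges (Gamma (policy_run E \<pi> \<phi> k) \<phi>) =
      \<phi> \<inter> out_edges (Gamma (policy_run E \<pi> \<phi> k) \<phi>)"
    using Suc.prems by blast
  then have "psi_of E (policy_run E \<pi> \<phi> k) \<phi>' = psi_of E (policy_run E \<pi> \<phi> k) \<phi>"
    by (rule psi_of_eq_if_out_edges_eq)
  then show ?case
    using Suc.IH[OF agree] by (simp add: policy_run_Suc policy_step_def)
qed simp

lemma feedback_determined_policy_run: "feedback_determined (\<lambda>\<phi>. policy_run E \<pi> \<phi> k)"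
  unfolding feedback_determined_def using policy_run_eq_if_out_edges_eq by blast

definition chosen_gain :: "(nat \<Rightarrow> real) \<Rightarrow> policy \<Rightarrow> partial_real \<Rightarrow> real" where
  "chosen_gain g \<pi> \<psi> = (case \<pi> \<psi> of None \<Rightarrow> 0 | Some v \<Rightarrow> if v \<in> fst \<psi> then 0 else g v)"

lemma sum_policy_run_Suc:
  "(\<Sum>i\<in>policy_run E \<pi> \<phi> (Suc k). g i) =
    (\<Sum>i\<in>policy_run E \<pi> \<phi> k. g i) + chosen_gain g \<pi> (psi_of E (policy_run E \<pi> \<phi> k) \<phi>)"
  using finite_policy_run[of E \<pi> \<phi> k]
  by (auto simp: chosen_gain_def policy_run_Suc policy_step_def insert_absorb split: option.split)

lemma card_policy_run_Suc_le:
  fixes \<pi> :: policy and k :: nat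
  assumes "finite \<phi>" and "\<phi> \<subseteq> E"
  defines "\<psi> \<equiv> psi_of E (policy_run E \<pi> \<phi> k) \<phi>"
  shows "real (card (Gamma (policy_run E \<pi> \<phi> (Suc k)) \<phi> - Gamma B \<phi>)) \<le>
    real (card (Gamma (policy_run E \<pi> \<phi> k) \<phi> - Gamma B \<phi>)) +
    chosen_gain (\<lambda>v. residual_gain (Gamma_psi \<psi> \<union> B) v \<phi>) \<pi> \<psi>"
proof (cases "\<exists>v. \<pi> \<psi> = Some v \<and> v \<notin> policy_run E \<pi> \<phi> k")
  case True
  then obtain v where "\<pi> \<psi> = Some v" "v \<notin> policy_run E \<pi> \<phi> k"
    by blast
  moreover have "Gamma_psi \<psi> = Gamma (policy_run E \<pi> \<phi> k) \<phi>"
    unfolding \<psi>_def using assms(2) by (rule Gamma_psi_psi_of)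
  ultimately show ?thesis
    using card_Gamma_insert_Diff_le[OF finite_policy_run assms(1), of v E \<pi> \<phi> k B]
    by (simp add: policy_run_Suc policy_step_def chosen_gain_def \<psi>_def)
next
  case False
  then have "policy_run E \<pi> \<phi> (Suc k) = policy_run E \<pi> \<phi> k"
    by (auto simp: policy_run_Suc policy_step_def \<psi>_def split: option.split)
  then show ?thesis
    using False by (auto simp: chosen_gain_def \<psi>_def split: option.split)
qed

lemma expectation_chosen_gain_le:
  assumes "finite E"
  shows "measure_pmf.expectation (realization_pmf E p) (\<lambda>\<phi>. chosen_gain (\<lambda>v. residual_gain (A \<union> B) v \<phi>) \<pi> \<psi>)
    \<le> chosen_gain (expected_gain E p B) \<pi> \<psi>"
proof (cases "\<exists>v. \<pi> \<psi> = Some v \<and> v \<notin> fst \<psi>")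
  case True
  then obtain v where v: "\<pi> \<psi> = Some v" "v \<notin> fst \<psi>"
    by blast
  have "residual_gain (A \<union> B) v \<phi> \<le> residual_gain B v \<phi>" if "\<phi> \<in> set_pmf (realization_pmf E p)" for \<phi>
    using finite_realization[OF assms that] by (rule residual_gain_antimono) simp
  then have "measure_pmf.expectation (realization_pmf E p) (residual_gain (A \<union> B) v) \<le> expected_gain E p B v"
    unfolding expected_gain_def using assms
    by (intro integral_mono_AE integrable_realization_pmf AE_pmfI) auto
  then show ?thesis
    using v by (simp add: chosen_gain_def)
next
  case False
  then show ?thesis
    by (auto simp: chosen_gain_def split: option.split)
qed

lemma expectation_card_policy_run_Diff_le:
  assumes "finite E"
  shows "measure_pmf.expectation (realization_pmf E p)
      (\<lambda>\<phi>. real (card (Gamma (policy_run E \<pi> \<phi> k) \<phi> - Gamma B \<phi>))) \<le>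
    measure_pmf.expectation (realization_pmf E p) (\<lambda>\<phi>. \<Sum>i\<in>policy_run E \<pi> \<phi> k. expected_gain E p B i)"
proof (induction k)
  case 0
  then show ?case
    by (simp add: Gamma_def)
next
  case (Suc k)
  let ?M = "realization_pmf E p" and ?obs = "\<lambda>\<phi>. psi_of E (policy_run E \<pi> \<phi> k) \<phi>"
  let ?G = "\<lambda>h \<phi>. chosen_gain (\<lambda>v. residual_gain (Gamma_psi h \<union> B) v \<phi>) \<pi> h"
  note integrable = integrable_realization_pmf[OF assms]
  have "measure_pmf.expectation ?M (\<lambda>\<phi>. real (card (Gamma (policy_run E \<pi> \<phi> (Suc k)) \<phi> - Gamma B \<phi>))) \<le>
      measure_pmf.expectation ?M (\<lambda>\<phi>. real (card (Gamma (policy_run E \<pi> \<phi> k) \<phi> - Gamma B \<phi>))) +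
      measure_pmf.expectation ?M (\<lambda>\<phi>. ?G (?obs \<phi>) \<phi>)"
    using set_pmf_realization_pmf assms
    by (subst Bochner_Integration.integral_add[OF integrable integrable, symmetric])
      (auto intro!: integral_mono_AE integrable AE_pmfI card_policy_run_Suc_le dest: finite_subset)
  also have "measure_pmf.expectation ?M (\<lambda>\<phi>. ?G (?obs \<phi>) \<phi>) =
      measure_pmf.expectation ?M (\<lambda>\<phi>. measure_pmf.expectation ?M (?G (?obs \<phi>)))"
    using assms feedback_determined_policy_run
    by (rule expectation_unobserved_edges) (simp add: chosen_gain_def residual_gain_Diff_out_edges)
  also have "\<dots> \<le> measure_pmf.expectation ?M (\<lambda>\<phi>. chosen_gain (expected_gain E p B) \<pi> (?obs \<phi>))"
    using assms
    by (intro integral_mono_AE integrable AE_pmfI expectation_chosen_gain_le)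
  finally show ?case
    using Suc.IH
    by (simp add: sum_policy_run_Suc Bochner_Integration.integral_add[OF integrable integrable])
qed

lemma expectation_card_policy_run_le:
  assumes "finite E" and "finite B"
  shows "measure_pmf.expectation (realization_pmf E p) (\<lambda>\<phi>. real (card (Gamma (policy_run E \<pi> \<phi> k) \<phi>))) \<le>
    sigma_set E p B +
    measure_pmf.expectation (realization_pmf E p) (\<lambda>\<phi>. \<Sum>i\<in>policy_run E \<pi> \<phi> k. expected_gain E p B i)"
proof -
  let ?M = "realization_pmf E p"
  note integrable = integrable_realization_pmf[OF assms(1)]
  have "real (card (Gamma (policy_run E \<pi> \<phi> k) \<phi>)) \<le>
      real (card (Gamma B \<phi>)) + real (card (Gamma (policy_run E \<pi> \<phi> k) \<phi> - Gamma B \<phi>))"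
    if "\<phi> \<in> set_pmf ?M" for \<phi>
  proof -
    have "finite \<phi>"
      using assms(1) that by (rule finite_realization)
    then have "finite (Gamma B \<phi>)"
      using assms(2) by (intro finite_Gamma)
    then have "card (Gamma (policy_run E \<pi> \<phi> k) \<phi>) \<le>
        card (Gamma B \<phi> \<union> (Gamma (policy_run E \<pi> \<phi> k) \<phi> - Gamma B \<phi>))"
      using \<open>finite \<phi>\<close> by (intro card_mono) (auto intro: finite_Gamma finite_policy_run)
    also have "\<dots> \<le> card (Gamma B \<phi>) + card (Gamma (policy_run E \<pi> \<phi> k) \<phi> - Gamma B \<phi>)"
      by (rule card_Un_le)
    finally show ?thesis
      by (simp only: of_nat_add[symmetric] of_nat_le_iff)
  qed
  then have "measure_pmf.expectation ?M (\<lambda>\<phi>. real (card (Gamma (policy_run E \<pi> \<phi> k) \<phi>))) \<le>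
      measure_pmf.expectation ?M (\<lambda>\<phi>. real (card (Gamma B \<phi>)) +
        real (card (Gamma (policy_run E \<pi> \<phi> k) \<phi> - Gamma B \<phi>)))"
    by (intro integral_mono_AE integrable AE_pmfI) simp
  also have "\<dots> = sigma_set E p B +
      measure_pmf.expectation ?M (\<lambda>\<phi>. real (card (Gamma (policy_run E \<pi> \<phi> k) \<phi> - Gamma B \<phi>)))"
    unfolding sigma_set_def by (rule Bochner_Integration.integral_add[OF integrable integrable])
  finally have "measure_pmf.expectation ?M (\<lambda>\<phi>. real (card (Gamma (policy_run E \<pi> \<phi> k) \<phi>))) \<le>
      sigma_set E p B +
      measure_pmf.expectation ?M (\<lambda>\<phi>. real (card (Gamma (policy_run E \<pi> \<phi> k) \<phi> - Gamma B \<phi>)))" .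
  then show ?thesis
    using expectation_card_policy_run_Diff_le[OF assms(1), where p = p and \<pi> = \<pi> and B = B and k = k] by linarith
qed

lemma sigma_set_nonneg: "0 \<le> sigma_set E p B"
  unfolding sigma_set_def by (rule integral_nonneg_AE) simp

lemma card_Gamma_seeds_le:
  assumes "valid_policy V \<pi>" and "\<phi> \<subseteq> E" and "finite V" and "finite E"
  shows "card (Gamma (seeds V E \<pi> \<phi>) \<phi>) \<le> card (V \<union> snd ` E)"
proof -
  have "Gamma (seeds V E \<pi> \<phi>) \<phi> \<subseteq> V \<union> snd ` E"
    using Gamma_subset_Un_snd[of "seeds V E \<pi> \<phi>" \<phi>] policy_run_subset[OF assms(1), of E \<phi> "card V"]
      assms(2)
    unfolding seeds_eq_policy_run by blast
  then show ?thesis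
    using assms(3,4) by (intro card_mono) auto
qed

lemma sum_seeds_eq_indicator:
  fixes g :: "nat \<Rightarrow> real"
  assumes "valid_policy V \<pi>" and "finite V"
  shows "(\<Sum>i\<in>seeds V E \<pi> \<phi>. g i) = (\<Sum>i\<in>V. g i * indicator {(\<pi>, \<phi>). i \<in> seeds V E \<pi> \<phi>} (\<pi>, \<phi>))"
proof -
  have "(\<Sum>i\<in>V. g i * indicator {(\<pi>, \<phi>). i \<in> seeds V E \<pi> \<phi>} (\<pi>, \<phi>)) =
      (\<Sum>i\<in>V. if i \<in> seeds V E \<pi> \<phi> then g i else 0)"
    by (intro sum.cong) (auto simp: indicator_def)
  also have "\<dots> = (\<Sum>i\<in>V \<inter> seeds V E \<pi> \<phi>. g i)"
    using assms(2) by (rule sum.inter_restrict[symmetric])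
  also have "V \<inter> seeds V E \<pi> \<phi> = seeds V E \<pi> \<phi>"
    using policy_run_subset[OF assms(1)] by (auto simp: seeds_eq_policy_run)
  finally show ?thesis ..
qed

lemma sigma_policy_le:
  assumes "finite E" and "finite V" and "finite B" and valid: "\<forall>\<pi>\<in>set_pmf R. valid_policy V \<pi>"
  shows "sigma_policy V E p R \<le> sigma_set E p B + (\<Sum>i\<in>V. sel_prob V E p R i * expected_gain E p B i)"
proof -
  let ?M = "realization_pmf E p" and ?\<Delta> = "expected_gain E p B"
  let ?sel = "\<lambda>i. {(\<pi>, \<phi>). i \<in> seeds V E \<pi> \<phi>}"
  define Y where "Y = (\<lambda>(\<pi>, \<phi>). real (card (Gamma (seeds V E \<pi> \<phi>) \<phi>)))"
  define Z where "Z x = sigma_set E p B + (\<Sum>i\<in>V. ?\<Delta> i * indicator (?sel i) x)" for x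
  have Z_nonneg: "0 \<le> Z x" for x
    unfolding Z_def by (intro add_nonneg_nonneg sigma_set_nonneg sum_nonneg) (simp add: expected_gain_nonneg)
  have Y_bounded: "Y (\<pi>, \<phi>) \<le> card (V \<union> snd ` E)" if "\<pi> \<in> set_pmf R" "\<phi> \<in> set_pmf ?M" for \<pi> \<phi>
    using card_Gamma_seeds_le[of V \<pi> \<phi> E] valid that realization_subset_edges assms(1,2)
    unfolding Y_def by simp
  have Z_bounded: "Z x \<le> sigma_set E p B + (\<Sum>i\<in>V. ?\<Delta> i)" for x
    unfolding Z_def by (intro add_left_mono sum_mono) (simp add: indicator_def expected_gain_nonneg)
  have "measure_pmf.expectation ?M (\<lambda>\<phi>. Y (\<pi>, \<phi>)) \<le> measure_pmf.expectation ?M (\<lambda>\<phi>. Z (\<pi>, \<phi>))"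
    if "\<pi> \<in> set_pmf R" for \<pi>
  proof -
    have "measure_pmf.expectation ?M (\<lambda>\<phi>. Y (\<pi>, \<phi>)) \<le>
        sigma_set E p B + measure_pmf.expectation ?M (\<lambda>\<phi>. \<Sum>i\<in>seeds V E \<pi> \<phi>. ?\<Delta> i)"
      unfolding Y_def seeds_eq_policy_run using assms(1,3) by (simp add: expectation_card_policy_run_le)
    also have "\<dots> = measure_pmf.expectation ?M (\<lambda>\<phi>. Z (\<pi>, \<phi>))"
      unfolding Z_def using valid that assms(1,2)
      by (simp add: sum_seeds_eq_indicator Bochner_Integration.integral_add integrable_realization_pmf)
    finally show ?thesis .
  qed
  then have "measure_pmf.expectation (pair_pmf R ?M) Y \<le> measure_pmf.expectation (pair_pmf R ?M) Z"
    using Y_bounded Z_bounded Z_nonneg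
    by (intro expectation_pair_pmf_mono[where c = "real (card (V \<union> snd ` E))"]) (auto simp: Y_def)
  also have "measure_pmf.expectation (pair_pmf R ?M) Z = sigma_set E p B + (\<Sum>i\<in>V. sel_prob V E p R i * ?\<Delta> i)"
    unfolding Z_def sel_prob_def by (simp add: expectation_const_plus_indicators mult.commute)
  finally show ?thesis
    unfolding sigma_policy_def Y_def .
qed

section \<open>Realizing marginals by static policies\<close>

definition static_policy :: "nat set \<Rightarrow> policy" where
  "static_policy S \<psi> = (if S - fst \<psi> = {} then None else Some (Min (S - fst \<psi>)))"

lemma static_policy_Some:
  assumes "finite S" and "S - fst \<psi> \<noteq> {}"
  shows "static_policy S \<psi> = Some (Min (S - fst \<psi>))" and "Min (S - fst \<psi>) \<in> S - fst \<psi>"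
proof -
  show "static_policy S \<psi> = Some (Min (S - fst \<psi>))"
    using assms(2) by (simp add: static_policy_def)
  show "Min (S - fst \<psi>) \<in> S - fst \<psi>"
    using assms by (intro Min_in) auto
qed

lemma valid_static_policy:
  assumes "S \<subseteq> V" and "finite S"
  shows "valid_policy V (static_policy S)"
  unfolding valid_policy_def
proof
  fix \<psi> :: partial_real
  show "static_policy S \<psi> = None \<or> (\<exists>v. static_policy S \<psi> = Some v \<and> v \<in> V \<and> v \<notin> fst \<psi>)"
  proof (cases "S - fst \<psi> = {}")
    case False
    then show ?thesis
      using static_policy_Some[OF assms(2) False] assms(1) by blast
  qed (simp add: static_policy_def)
qed

lemma policy_run_static_policy:
  assumes "finite S"
  shows "policy_run E (static_policy S) \<phi> k \<subseteq> S \<and> card (policy_run E (static_policy S) \<phi> k) = min k (card S)"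
proof (induction k)
  case (Suc k)
  let ?T = "policy_run E (static_policy S) \<phi> k"
  have IH: "?T \<subseteq> S" "card ?T = min k (card S)"
    using Suc.IH by auto
  show ?case
  proof (cases "S - ?T = {}")
    case True
    then have "?T = S" and "static_policy S (psi_of E ?T \<phi>) = None"
      using IH(1) by (auto simp: static_policy_def)
    then show ?thesis
      using IH(2) by (simp add: policy_run_Suc policy_step_def)
  next
    case False
    let ?m = "Min (S - ?T)"
    have "policy_run E (static_policy S) \<phi> (Suc k) = insert ?m ?T" and m: "?m \<in> S - ?T"
      using static_policy_Some[OF assms, of "psi_of E ?T \<phi>"] False
      by (simp_all add: policy_run_Suc policy_step_def)
    moreover have "card ?T < card S"
      using IH(1) False assms by (intro psubset_card_mono) auto
    ultimately show ?thesis
      using IH m finite_policy_run[of E "static_policy S" \<phi> k] by simp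
  qed
qed simp

lemma seeds_static_policy:
  assumes "finite V" and "S \<subseteq> V"
  shows "seeds V E (static_policy S) \<phi> = S"
proof -
  have "finite S"
    using assms finite_subset by blast
  moreover have "card S \<le> card V"
    using assms by (rule card_mono)
  ultimately show ?thesis
    using policy_run_static_policy[of S E \<phi> "card V"]
    by (simp add: seeds_eq_policy_run card_subset_eq min_absorb2)
qed

lemma static_policies_realize_marginals:
  assumes "finite V" and "\<forall>i\<in>V. 0 \<le> x i \<and> x i \<le> 1"
  shows "\<exists>R. (\<forall>\<pi>\<in>set_pmf R. valid_policy V \<pi>) \<and> (\<forall>i\<in>V. sel_prob V E p R i = x i)"
proof (intro exI conjI ballI)
  let ?Q = "bernoulli_set_pmf V x" and ?M = "realization_pmf E p"
  let ?R = "map_pmf static_policy ?Q"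
  have subset: "S \<subseteq> V" if "S \<in> set_pmf ?Q" for S
    using that set_pmf_bernoulli_set_pmf by blast
  show "valid_policy V \<pi>" if "\<pi> \<in> set_pmf ?R" for \<pi>
    using that subset assms(1) by (auto intro!: valid_static_policy dest: finite_subset)
  fix i assume "i \<in> V"
  have "sel_prob V E p ?R i = measure_pmf.prob (pair_pmf ?Q ?M) {(S, \<phi>). i \<in> seeds V E (static_policy S) \<phi>}"
    unfolding sel_prob_def pair_map_pmf1 by (simp add: apfst_def map_prod_def case_prod_unfold)
  also have "\<dots> = measure_pmf.prob (pair_pmf ?Q ?M) (fst -` {S. i \<in> S})"
    using subset seeds_static_policy[OF assms(1)]
    by (intro measure_prob_cong_0) (auto simp: pmf_eq_0_set_pmf)
  also have "\<dots> = measure_pmf.prob (map_pmf fst (pair_pmf ?Q ?M)) {S. i \<in> S}"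
    by (simp only: measure_map_pmf)
  also have "\<dots> = x i"
    using prob_bernoulli_set_pmf_mem[OF assms(1) \<open>i \<in> V\<close>] assms(2) \<open>i \<in> V\<close>
    by (simp add: map_fst_pair_pmf)
  finally show "sel_prob V E p ?R i = x i" .
qed

lemma f_plus_le:
  assumes "finite E" and "finite V" and "finite B" and "\<forall>i\<in>V. 0 \<le> x i \<and> x i \<le> 1"
  shows "f_plus V E p x \<le> sigma_set E p B + (\<Sum>i\<in>V. x i * expected_gain E p B i)"
  unfolding f_plus_def
proof (rule cSup_least)
  show "{sigma_policy V E p R |R. (\<forall>\<pi>\<in>set_pmf R. valid_policy V \<pi>) \<and> (\<forall>i\<in>V. sel_prob V E p R i = x i)} \<noteq> {}"
    using static_policies_realize_marginals[OF assms(2,4)] by blast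
next
  fix y
  assume "y \<in> {sigma_policy V E p R |R. (\<forall>\<pi>\<in>set_pmf R. valid_policy V \<pi>) \<and> (\<forall>i\<in>V. sel_prob V E p R i = x i)}"
  then obtain R where "y = sigma_policy V E p R" "\<forall>\<pi>\<in>set_pmf R. valid_policy V \<pi>"
    "\<forall>i\<in>V. sel_prob V E p R i = x i"
    by blast
  then show "y \<le> sigma_set E p B + (\<Sum>i\<in>V. x i * expected_gain E p B i)"
    using sigma_policy_le[OF assms(1-3), of R p] by simp
qed

section \<open>Clock signals in a short time interval\<close>

lemma tendsto_prod_div_at_right:
  fixes q r :: "'a \<Rightarrow> real \<Rightarrow> real"
  assumes "finite V" and "C \<subseteq> V" and "i \<in> C"
    and "((\<lambda>h. q i h / h) \<longlongrightarrow> a) (at_right 0)"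
    and "\<And>j. j \<in> V \<Longrightarrow> (q j \<longlongrightarrow> 0) (at_right 0)" and "\<And>j. j \<in> V \<Longrightarrow> (r j \<longlongrightarrow> 1) (at_right 0)"
  shows "((\<lambda>h. (\<Prod>j\<in>V. if j \<in> C then q j h else r j h) / h) \<longlongrightarrow> (if C = {i} then a else 0))
    (at_right 0)"
proof -
  let ?f = "\<lambda>j h. if j \<in> C then q j h else r j h"
  have "i \<in> V"
    using assms(2,3) by blast
  have "(?f j \<longlongrightarrow> (if j \<in> C then 0 else 1)) (at_right 0)" if "j \<in> V" for j
    using assms(5,6)[OF that] by auto
  then have "((\<lambda>h. \<Prod>j\<in>V - {i}. ?f j h) \<longlongrightarrow> (\<Prod>j\<in>V - {i}. if j \<in> C then 0 else 1)) (at_right 0)"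
    by (intro tendsto_prod) auto
  moreover have "(\<Prod>j\<in>V - {i}. if j \<in> C then 0 else 1 :: real) = (if C = {i} then 1 else 0)"
    using assms(1-3) by (auto simp: prod_zero_iff)
  ultimately have "((\<lambda>h. \<Prod>j\<in>V - {i}. ?f j h) \<longlongrightarrow> (if C = {i} then 1 else 0)) (at_right 0)"
    by simp
  from tendsto_mult[OF assms(4) this]
  have "((\<lambda>h. q i h / h * (\<Prod>j\<in>V - {i}. ?f j h)) \<longlongrightarrow> (if C = {i} then a else 0)) (at_right 0)"
    by (cases "C = {i}") simp_all
  moreover have eq: "(\<Prod>j\<in>V. ?f j h) / h = q i h / h * (\<Prod>j\<in>V - {i}. ?f j h)" for h
    using prod.remove[OF assms(1) \<open>i \<in> V\<close>, of "\<lambda>j. ?f j h"] assms(3) by simp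
  ultimately show ?thesis
    by (simp only: eq)
qed

lemma sum_Pow_singletons:
  fixes K :: "'a set \<Rightarrow> real"
  assumes "finite V"
  shows "(\<Sum>C\<in>Pow V. (\<Sum>i\<in>V. if C = {i} then x i else 0) * K C) = (\<Sum>i\<in>V. x i * K {i})"
proof -
  have "(\<Sum>i\<in>V. if C = {i} then x i else 0) * K C = (\<Sum>i\<in>V. if C = {i} then x i * K {i} else 0)"
    for C
    by (auto simp: sum_distrib_right intro!: sum.cong)
  then have "(\<Sum>C\<in>Pow V. (\<Sum>i\<in>V. if C = {i} then x i else 0) * K C) =
      (\<Sum>i\<in>V. \<Sum>C\<in>Pow V. if C = {i} then x i * K {i} else 0)"
    by (simp add: sum.swap[of _ "Pow V"])
  also have "\<dots> = (\<Sum>i\<in>V. x i * K {i})"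
    using assms by (intro sum.cong refl) (simp add: sum.delta')
  finally show ?thesis .
qed

lemma sum_if_eq_singleton:
  assumes "C \<subseteq> V" and "i \<in> C" and "finite V"
  shows "(\<Sum>j\<in>V. if C = {j} then x j else 0) = (if C = {i} then x i else 0)"
proof (cases "C = {i}")
  case True
  then show ?thesis
    using assms by (simp add: sum.delta')
next
  case False
  then have "C \<noteq> {j}" for j
    using assms(2) by blast
  then show ?thesis
    by simp
qed

lemma expectation_signal_pmf:
  assumes "finite V" and "\<forall>i\<in>V. 0 \<le> x i" and "0 \<le> h"
  shows "measure_pmf.expectation (signal_pmf V x h) K =
    (\<Sum>C\<in>Pow V. (\<Prod>j\<in>V. if j \<in> C then 1 - exp (- (x j * h)) else exp (- (x j * h))) * K C)"
proof -
  have "\<forall>j\<in>V. 0 \<le> 1 - exp (- (x j * h)) \<and> 1 - exp (- (x j * h)) \<le> 1"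
    using assms(2,3) by simp
  then have "pmf (signal_pmf V x h) C = (\<Prod>j\<in>V. if j \<in> C then 1 - exp (- (x j * h)) else exp (- (x j * h)))"
    if "C \<in> Pow V" for C
    using assms(1) that by (simp add: signal_pmf_eq_bernoulli_set_pmf pmf_bernoulli_set_pmf cong: if_cong)
  moreover have "measure_pmf.expectation (signal_pmf V x h) K = (\<Sum>C\<in>Pow V. pmf (signal_pmf V x h) C * K C)"
    using assms(1) set_pmf_signal_pmf[of V x h] by (intro expectation_pmf_finite) auto
  ultimately show ?thesis
    by simp
qed

text \<open>Only single signals contribute to first order.\<close>
lemma tendsto_expectation_signal_pmf_div:
  assumes "finite V" and "\<forall>i\<in>V. 0 \<le> x i" and "K {} = 0"
  shows "((\<lambda>h. measure_pmf.expectation (signal_pmf V x h) K / h) \<longlongrightarrow> (\<Sum>i\<in>V. x i * K {i})) (at_right 0)"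
proof -
  let ?P = "\<lambda>C h. \<Prod>j\<in>V. if j \<in> C then 1 - exp (- (x j * h)) else exp (- (x j * h))"
  let ?rate = "\<lambda>C. \<Sum>i\<in>V. if C = {i} then x i else 0"
  have "((\<lambda>h. ?P C h / h * K C) \<longlongrightarrow> ?rate C * K C) (at_right 0)" if C: "C \<in> Pow V" for C
  proof (cases "C = {}")
    case False
    then obtain i where "i \<in> C"
      by blast
    have rate: "?rate C = (if C = {i} then x i else 0)"
      using C \<open>i \<in> C\<close> assms(1) by (intro sum_if_eq_singleton) auto
    have "((\<lambda>h. (1 - exp (- (x i * h))) / h) \<longlongrightarrow> x i) (at_right 0)"
      "((\<lambda>h. 1 - exp (- (x j * h))) \<longlongrightarrow> 0) (at_right 0)" "((\<lambda>h. exp (- (x j * h))) \<longlongrightarrow> 1) (at_right 0)"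
      for j
      by real_asymp+
    then have "((\<lambda>h. ?P C h / h) \<longlongrightarrow> (if C = {i} then x i else 0)) (at_right 0)"
      using C \<open>i \<in> C\<close> by (intro tendsto_prod_div_at_right[OF assms(1)]) auto
    then show ?thesis
      unfolding rate by (rule tendsto_mult_right)
  qed (simp add: assms(3))
  then have "((\<lambda>h. \<Sum>C\<in>Pow V. ?P C h / h * K C) \<longlongrightarrow> (\<Sum>C\<in>Pow V. ?rate C * K C)) (at_right 0)"
    by (rule tendsto_sum)
  then have "((\<lambda>h. \<Sum>C\<in>Pow V. ?P C h / h * K C) \<longlongrightarrow> (\<Sum>i\<in>V. x i * K {i})) (at_right 0)"
    unfolding sum_Pow_singletons[OF assms(1)] .
  moreover have "\<forall>\<^sub>F h in at_right 0.
      (\<Sum>C\<in>Pow V. ?P C h / h * K C) = measure_pmf.expectation (signal_pmf V x h) K / h"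
    using eventually_at_right_less[of "0::real"]
    by eventually_elim (simp add: expectation_signal_pmf[OF assms(1,2)] sum_divide_distrib)
  ultimately show ?thesis
    by (rule Lim_transform_eventually)
qed

section \<open>Conditioning on the observed partial realization\<close>

lemma map_fst_Psi_pair_law: "map_pmf fst (Psi_pair_law V E p x t h) = Psi_law V E p x t"
proof -
  let ?SA = "signal_pmf V x t" and ?SC = "signal_pmf V x h" and ?M = "realization_pmf E p"
  have "pair_pmf ?SA ?M = map_pmf (apfst fst) (pair_pmf (pair_pmf ?SA ?SC) ?M)"
    by (simp add: pair_map_pmf1[symmetric] map_fst_pair_pmf)
  then show ?thesis
    unfolding Psi_pair_law_def Psi_law_def by (simp add: pmf.map_comp o_def case_prod_unfold)
qed

lemma pmf_Psi_law:
  assumes "finite V" and "finite E"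
  shows "pmf (Psi_law V E p x t) \<psi> = measure_pmf.expectation (signal_pmf V x t)
    (\<lambda>A. measure_pmf.expectation (realization_pmf E p) (\<lambda>\<phi>. if psi_of E A \<phi> = \<psi> then 1 else 0))"
proof -
  let ?P = "pair_pmf (signal_pmf V x t) (realization_pmf E p)"
  have "pmf (Psi_law V E p x t) \<psi> = measure_pmf.expectation ?P (indicator ((\<lambda>(A, \<phi>). psi_of E A \<phi>) -` {\<psi>}))"
    unfolding Psi_law_def by (simp add: pmf_map)
  also have "\<dots> = measure_pmf.expectation ?P (\<lambda>(A, \<phi>). if psi_of E A \<phi> = \<psi> then 1 else 0)"
    by (intro Bochner_Integration.integral_cong) (auto simp: indicator_def)
  finally show ?thesis
    using assms
    by (simp add: expectation_pair_pmf_finite finite_set_pmf_realization_pmf signal_pmf_eq_bernoulli_set_pmf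
        finite_set_pmf_bernoulli_set_pmf)
qed

text \<open>\<open>increment_weight V E p x t \<psi> C\<close> is \<open>E[f(\<Psi>') - f(\<Psi>(t)); \<Psi>(t) = \<psi>]\<close>, where \<open>\<Psi>'\<close> arises from
  \<open>\<Psi>(t)\<close> by additionally seeding \<open>C\<close>.\<close>
definition increment_weight ::
    "nat set \<Rightarrow> edge set \<Rightarrow> (edge \<Rightarrow> real) \<Rightarrow> (nat \<Rightarrow> real) \<Rightarrow> real \<Rightarrow> partial_real \<Rightarrow> nat set \<Rightarrow> real" where
  "increment_weight V E p x t \<psi> C = measure_pmf.expectation (signal_pmf V x t) (\<lambda>A.
     measure_pmf.expectation (realization_pmf E p) (\<lambda>\<phi>.
       if psi_of E A \<phi> = \<psi> then f_psi (psi_of E (A \<union> C) \<phi>) - f_psi (psi_of E A \<phi>) else 0))"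

lemma cond_increment_eq:
  assumes "finite V" and "finite E" and "\<psi> \<in> set_pmf (Psi_law V E p x t)"
  shows "cond_increment V E p x t h \<psi> =
    measure_pmf.expectation (signal_pmf V x h) (increment_weight V E p x t \<psi>) / pmf (Psi_law V E p x t) \<psi>"
proof -
  let ?SA = "signal_pmf V x t" and ?SC = "signal_pmf V x h" and ?M = "realization_pmf E p"
  let ?P = "Psi_pair_law V E p x t h" and ?Ev = "{q. fst q = \<psi>}"
  have fin: "finite (set_pmf ?SA)" "finite (set_pmf ?SC)" "finite (set_pmf ?M)"
    using assms(1,2)
    by (simp_all add: signal_pmf_eq_bernoulli_set_pmf finite_set_pmf_bernoulli_set_pmf finite_set_pmf_realization_pmf)
  then have "finite (set_pmf ?P)"
    by (simp add: Psi_pair_law_def)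
  moreover have "set_pmf ?P \<inter> ?Ev \<noteq> {}"
    using assms(3) unfolding map_fst_Psi_pair_law[symmetric, of V E p x t h] set_map_pmf by blast
  moreover have "measure_pmf.prob ?P ?Ev = measure_pmf.prob (map_pmf fst ?P) {\<psi>}"
    by (simp add: vimage_def)
  then have "measure_pmf.prob ?P ?Ev = pmf (Psi_law V E p x t) \<psi>"
    by (simp add: map_fst_Psi_pair_law measure_pmf_single)
  moreover have "measure_pmf.expectation ?P (\<lambda>q. if q \<in> ?Ev then (case q of (a, b) \<Rightarrow> f_psi b - f_psi a) else 0) =
      measure_pmf.expectation ?SC (increment_weight V E p x t \<psi>)"
    unfolding Psi_pair_law_def increment_weight_def using fin
    by (simp add: expectation_pair_pmf_finite[of "pair_pmf ?SA ?SC" ?M]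
        expectation_pair_pmf_finite_swap[of ?SA ?SC] case_prod_unfold cong: if_cong)
  ultimately show ?thesis
    unfolding cond_increment_def by (simp add: expectation_cond_pmf)
qed

lemma f_psi_increment_eq_residual_gain:
  assumes "\<phi> \<subseteq> E" and "finite A" and "finite \<phi>"
  shows "f_psi (psi_of E (A \<union> {i}) \<phi>) - f_psi (psi_of E A \<phi>) = residual_gain (Gamma_psi (psi_of E A \<phi>)) i \<phi>"
proof -
  have B: "Gamma A \<phi> = Gamma_psi (psi_of E A \<phi>)"
    using Gamma_psi_psi_of[OF assms(1), of A] by simp
  have "f_psi (psi_of E (A \<union> {i}) \<phi>) - f_psi (psi_of E A \<phi>) =
      real (card (Gamma (insert i A) \<phi>)) - real (card (Gamma A \<phi>))"
    by (simp add: f_psi_psi_of[OF assms(1)])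
  also have "\<dots> = residual_gain (Gamma_psi (psi_of E A \<phi>)) i \<phi>"
    using card_Gamma_insert[OF B assms(2,3), of i] B by simp
  finally show ?thesis .
qed

text \<open>On the event that seeding \<open>A\<close> produces the feedback \<open>\<psi>\<close>, the gain of additionally seeding
  \<open>i\<close> only involves unobserved edges.\<close>
lemma expectation_increment_on_feedback:
  assumes "finite E" and "finite A"
  shows "measure_pmf.expectation (realization_pmf E p) (\<lambda>\<phi>. if psi_of E A \<phi> = \<psi> then
        f_psi (psi_of E (A \<union> {i}) \<phi>) - f_psi (psi_of E A \<phi>) else 0) =
    measure_pmf.expectation (realization_pmf E p) (\<lambda>\<phi>. if psi_of E A \<phi> = \<psi> then 1 else 0) *
    expected_gain E p (Gamma_psi \<psi>) i"
proof -
  let ?M = "realization_pmf E p" and ?B = "Gamma_psi \<psi>"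
  let ?G = "\<lambda>h \<phi>. if h = \<psi> then residual_gain ?B i \<phi> else 0"
  have "measure_pmf.expectation ?M (\<lambda>\<phi>. if psi_of E A \<phi> = \<psi> then
        f_psi (psi_of E (A \<union> {i}) \<phi>) - f_psi (psi_of E A \<phi>) else 0) =
      measure_pmf.expectation ?M (\<lambda>\<phi>. ?G (psi_of E A \<phi>) \<phi>)"
    using assms f_psi_increment_eq_residual_gain realization_subset_edges finite_realization
    by (intro expectation_cong_pmf) auto
  also have "\<dots> = measure_pmf.expectation ?M (\<lambda>\<phi>. measure_pmf.expectation ?M (?G (psi_of E A \<phi>)))"
    using assms(1) feedback_determined_const
    by (rule expectation_unobserved_edges) (simp add: residual_gain_Diff_out_edges)
  also have "(\<lambda>\<phi>. measure_pmf.expectation ?M (?G (psi_of E A \<phi>))) =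
      (\<lambda>\<phi>. (if psi_of E A \<phi> = \<psi> then 1 else 0) * expected_gain E p ?B i)"
    by (simp add: expected_gain_def fun_eq_iff)
  finally show ?thesis
    by simp
qed

lemma increment_weight_singleton:
  assumes "finite V" and "finite E"
  shows "increment_weight V E p x t \<psi> {i} = pmf (Psi_law V E p x t) \<psi> * expected_gain E p (Gamma_psi \<psi>) i"
proof -
  have "finite A" if "A \<in> set_pmf (signal_pmf V x t)" for A
    using that set_pmf_signal_pmf assms(1) by (meson PowD finite_subset subsetD)
  then have "increment_weight V E p x t \<psi> {i} = measure_pmf.expectation (signal_pmf V x t) (\<lambda>A.
      measure_pmf.expectation (realization_pmf E p) (\<lambda>\<phi>. if psi_of E A \<phi> = \<psi> then 1 else 0) *
      expected_gain E p (Gamma_psi \<psi>) i)"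
    unfolding increment_weight_def using assms(2)
    by (intro expectation_cong_pmf) (simp add: expectation_increment_on_feedback)
  then show ?thesis
    by (simp add: pmf_Psi_law[OF assms])
qed

lemma finite_edges: "influence_graph V E p \<Longrightarrow> finite E"
  unfolding influence_graph_def by (metis finite_SigmaI finite_subset)

lemma finite_Gamma_psi_Psi_law:
  assumes "finite V" and "finite E" and "\<psi> \<in> set_pmf (Psi_law V E p x t)"
  shows "finite (Gamma_psi \<psi>)"
proof -
  obtain A \<phi> where "A \<in> set_pmf (signal_pmf V x t)" "\<phi> \<in> set_pmf (realization_pmf E p)" "\<psi> = psi_of E A \<phi>"
    using assms(3) unfolding Psi_law_def by auto
  moreover from this have "finite A" and "finite \<phi>"
    using assms(1,2) set_pmf_signal_pmf[of V x t]
    by (auto simp: finite_realization intro: finite_subset)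
  ultimately show ?thesis
    by (simp add: Gamma_psi_psi_of realization_subset_edges finite_Gamma)
qed

theorem cond_increment_rate:
  assumes "influence_graph V E p" and "\<forall>i\<in>V. 0 \<le> x i" and "\<psi> \<in> set_pmf (Psi_law V E p x t)"
  shows "((\<lambda>h. cond_increment V E p x t h \<psi> / h) \<longlongrightarrow> (\<Sum>i\<in>V. x i * expected_gain E p (Gamma_psi \<psi>) i))
    (at_right 0)"
proof -
  let ?prob = "pmf (Psi_law V E p x t) \<psi>" and ?K = "increment_weight V E p x t \<psi>"
  have fin: "finite V" "finite E"
    using assms(1) finite_edges by (auto simp: influence_graph_def)
  have "?prob > 0"
    using assms(3) by (simp add: pmf_positive)
  have "?K {} = 0"
    unfolding increment_weight_def Un_empty_right diff_self if_cancel by simp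
  with fin(1) assms(2) have "((\<lambda>h. measure_pmf.expectation (signal_pmf V x h) ?K / h / ?prob) \<longlongrightarrow>
      (\<Sum>i\<in>V. x i * ?K {i}) / ?prob) (at_right 0)"
    using \<open>?prob > 0\<close> by (intro tendsto_divide tendsto_expectation_signal_pmf_div tendsto_const) auto
  moreover have "(\<Sum>i\<in>V. x i * ?K {i}) / ?prob = (\<Sum>i\<in>V. x i * expected_gain E p (Gamma_psi \<psi>) i)"
    using \<open>?prob > 0\<close> by (simp add: increment_weight_singleton[OF fin] sum_divide_distrib)
  moreover have "cond_increment V E p x t h \<psi> / h = measure_pmf.expectation (signal_pmf V x h) ?K / h / ?prob" for h
    by (simp add: cond_increment_eq[OF fin assms(3)])
  ultimately show ?thesis
    by simp
qed

theorem lemma2: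
  fixes n :: nat and E :: "edge set" and p :: "edge \<Rightarrow> real" and x :: "nat \<Rightarrow> real"
    and t :: real and \<psi> :: partial_real
  assumes "influence_graph {1..n} E p"
    and "\<forall>i\<in>{1..n}. 0 \<le> x i \<and> x i \<le> 1"
    and "0 \<le> t" and "t \<le> 1"
    and "\<psi> \<in> set_pmf (Psi_law {1..n} E p x t)"
  shows "\<exists>L. ((\<lambda>h. cond_increment {1..n} E p x t h \<psi> / h) \<longlongrightarrow> L) (at_right 0)
             \<and> L \<ge> f_plus {1..n} E p x - sigma_set E p (Gamma_psi \<psi>)"
proof (intro exI conjI)
  have "finite E"
    using assms(1) by (rule finite_edges)
  show "((\<lambda>h. cond_increment {1..n} E p x t h \<psi> / h) \<longlongrightarrow>
      (\<Sum>i\<in>{1..n}. x i * expected_gain E p (Gamma_psi \<psi>) i)) (at_right 0)"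
    using assms(2) by (intro cond_increment_rate[OF assms(1) _ assms(5)]) simp
  have "finite (Gamma_psi \<psi>)"
    using \<open>finite E\<close> assms(5) by (intro finite_Gamma_psi_Psi_law) auto
  show "f_plus {1..n} E p x - sigma_set E p (Gamma_psi \<psi>) \<le>
      (\<Sum>i\<in>{1..n}. x i * expected_gain E p (Gamma_psi \<psi>) i)"
    using f_plus_le[where p = p, OF \<open>finite E\<close> finite_atLeastAtMost \<open>finite (Gamma_psi \<psi>)\<close> assms(2)]
    by linarith
qed

end
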